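(* For positive integers $n$ and $k$, let $w_{n,k}(321)$ be the number of words $w_1\cdots w_n$ with all $w_i\in[k]$ for which there are no indices $i_1<i_2<i_3$ with $w_{i_1}>w_{i_2}>w_{i_3}$. Then \[w_{n,k}(321)=\sum_{a=0}^{\lfloor n/2\rfloor}\frac{n!\,(k+n-a-1)_{n-a}\,(k+a-2)_a}{\big(a!\,(n-2a)!\,(n-a+1)_a\big)^2}.\]
   Context: $[k]=\{1,\dots,k\}$. $(x)_m$ denotes the falling factorial $x(x-1)\cdots(x-m+1)$, with $(x)_0=1$. *)

theory Defs
  imports Complex_Main
begin

definition falling_fact :: "real \<Rightarrow> nat \<Rightarrow> real" where
  "falling_fact x m = (\<Prod>i<m. x - real i)"

definition avoids321 :: "nat list \<Rightarrow> bool" where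
  "avoids321 w \<longleftrightarrow> \<not> (\<exists>i1 i2 i3. i1 < i2 \<and> i2 < i3 \<and> i3 < length w \<and>
       w ! i1 > w ! i2 \<and> w ! i2 > w ! i3)"

definition w321 :: "nat \<Rightarrow> nat \<Rightarrow> nat" where
  "w321 n k = card {w :: nat list. length w = n \<and> set w \<subseteq> {1..k} \<and> avoids321 w}"

end

theory Submission
  imports Defs
begin

(*
  A letter x can be appended to a 321-avoiding word exactly when x is at least every
  smaller entry of an inversion of the word.  So the 321-avoiding words over [k] are the
  words accepted by an automaton whose state (b, M) records the largest such smaller entry b
  and the largest letter M read so far.  With alpha = k + 1 - b and beta = k + 1 - M, the
  number of accepted words of length n satisfies a recurrence in n, alpha and beta, and so does

    D(n, alpha, beta) = sum_a C(n, a) (h_a(alpha) h_(n-a)(beta) - h_(a-1)(alpha) h_(n-a+1)(beta)),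

  where h_m(v) = C(v + m - 1, m) counts multisets: summing over the next letter is a
  hockey-stick sum in one row of each determinant.  For alpha = beta = k the determinants
  telescope in a, so writing C(n, a) as the sum of the ballot numbers C(n, j) - C(n, j - 1)
  over j <= min(a, n - a) leaves sum_j (C(n, j) - C(n, j - 1)) (h_j h_(n-j) - h_(j-1) h_(n-j+1)),
  whose terms are the summands of the formula.
*)

section \<open>321-avoiding words as the language of an automaton\<close>

definition inversion_bottom :: "nat list \<Rightarrow> nat \<Rightarrow> bool" where
  "inversion_bottom p y \<longleftrightarrow> (\<exists>i j. i < j \<and> j < length p \<and> p ! i > p ! j \<and> p ! j = y)"

lemma avoids321_appendD:
  assumes "avoids321 (p @ u)"
  shows "avoids321 p"
  unfolding avoids321_def
proof (intro notI, elim exE conjE)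
  fix i1 i2 i3
  assume "i1 < i2" "i2 < i3" "i3 < length p" "p ! i2 < p ! i1" "p ! i3 < p ! i2"
  then have "i1 < i2 \<and> i2 < i3 \<and> i3 < length (p @ u) \<and>
      (p @ u) ! i2 < (p @ u) ! i1 \<and> (p @ u) ! i3 < (p @ u) ! i2"
    by (simp add: nth_append)
  then show False using assms unfolding avoids321_def by blast
qed

lemma avoids321_snoc:
  "avoids321 (p @ [x]) \<longleftrightarrow> avoids321 p \<and> (\<forall>y. inversion_bottom p y \<longrightarrow> y \<le> x)"
proof
  assume A: "avoids321 (p @ [x])"
  show "avoids321 p \<and> (\<forall>y. inversion_bottom p y \<longrightarrow> y \<le> x)"
  proof (intro conjI allI impI)
    show "avoids321 p" using A by (rule avoids321_appendD)
  next
    fix y assume "inversion_bottom p y"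
    then obtain i j where ij: "i < j" "j < length p" "p ! i > p ! j" "p ! j = y"
      unfolding inversion_bottom_def by blast
    show "y \<le> x"
    proof (rule ccontr)
      assume "\<not> y \<le> x"
      then have "i < j \<and> j < length p \<and> length p < length (p @ [x]) \<and>
          (p @ [x]) ! j < (p @ [x]) ! i \<and> (p @ [x]) ! length p < (p @ [x]) ! j"
        using ij by (simp add: nth_append)
      then show False using A unfolding avoids321_def by blast
    qed
  qed
next
  assume B: "avoids321 p \<and> (\<forall>y. inversion_bottom p y \<longrightarrow> y \<le> x)"
  show "avoids321 (p @ [x])"
    unfolding avoids321_def
  proof (intro notI, elim exE conjE)
    fix i1 i2 i3
    assume h: "i1 < i2" "i2 < i3" "i3 < length (p @ [x])"
      "(p @ [x]) ! i2 < (p @ [x]) ! i1" "(p @ [x]) ! i3 < (p @ [x]) ! i2"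
    show False
    proof (cases "i3 < length p")
      case True
      then show False using h B unfolding avoids321_def by (auto simp: nth_append)
    next
      case False
      then have "i3 = length p" using h(3) by simp
      then have "inversion_bottom p (p ! i2)" "x < p ! i2"
        using h unfolding inversion_bottom_def by (auto simp: nth_append)
      then show False using B by fastforce
    qed
  qed
qed

lemma inversion_bottom_snoc:
  "inversion_bottom (p @ [x]) y \<longleftrightarrow> inversion_bottom p y \<or> (y = x \<and> (\<exists>z\<in>set p. z > x))"
proof
  assume "inversion_bottom (p @ [x]) y"
  then obtain i j where h: "i < j" "j < length (p @ [x])" "(p @ [x]) ! i > (p @ [x]) ! j"
    "(p @ [x]) ! j = y"
    unfolding inversion_bottom_def by blast
  show "inversion_bottom p y \<or> (y = x \<and> (\<exists>z\<in>set p. z > x))"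
  proof (cases "j < length p")
    case True
    then show ?thesis using h unfolding inversion_bottom_def by (auto simp: nth_append)
  next
    case False
    then show ?thesis using h by (auto simp: nth_append)
  qed
next
  assume "inversion_bottom p y \<or> (y = x \<and> (\<exists>z\<in>set p. z > x))"
  then show "inversion_bottom (p @ [x]) y"
  proof
    assume "inversion_bottom p y"
    then obtain i j where "i < j" "j < length p" "p ! i > p ! j" "p ! j = y"
      unfolding inversion_bottom_def by blast
    then show ?thesis unfolding inversion_bottom_def
      by (intro exI[of _ i] exI[of _ j]) (auto simp: nth_append)
  next
    assume "y = x \<and> (\<exists>z\<in>set p. z > x)"
    then obtain i where "i < length p" "p ! i > x" "y = x" by (auto simp: in_set_conv_nth)
    then show ?thesis unfolding inversion_bottom_def
      by (intro exI[of _ i] exI[of _ "length p"]) (auto simp: nth_append)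
  qed
qed

definition prefix_state :: "nat list \<Rightarrow> nat \<Rightarrow> nat \<Rightarrow> bool" where
  "prefix_state p b M \<longleftrightarrow> 1 \<le> b \<and> (\<forall>y\<in>set p. y \<le> M) \<and> (M = 1 \<or> M \<in> set p)
     \<and> (\<forall>y. inversion_bottom p y \<longrightarrow> y \<le> b) \<and> (b = 1 \<or> inversion_bottom p b)"

lemma prefix_state_Nil: "prefix_state [] 1 1"
  unfolding prefix_state_def inversion_bottom_def by simp

lemma avoids321_snoc_iff_state:
  assumes "prefix_state p b M" "avoids321 p" "1 \<le> x"
  shows "avoids321 (p @ [x]) \<longleftrightarrow> b \<le> x"
  using assms unfolding avoids321_snoc prefix_state_def
  by (metis le_trans)

lemma prefix_state_snoc:
  assumes I: "prefix_state p b M" and bx: "b \<le> x"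
  shows "prefix_state (p @ [x]) (if x < M then x else b) (max M x)"
proof -
  have xM: "x < M \<longleftrightarrow> (\<exists>z\<in>set p. z > x)"
    using assms unfolding prefix_state_def by (metis le_trans not_le)
  show ?thesis
  proof (cases "x < M")
    case True
    with xM have e: "\<exists>z\<in>set p. z > x" by blast
    have "prefix_state (p @ [x]) x M"
      unfolding prefix_state_def inversion_bottom_snoc
    proof (intro conjI)
      show "1 \<le> x" using bx I unfolding prefix_state_def by simp
      show "\<forall>y\<in>set (p @ [x]). y \<le> M" using I True unfolding prefix_state_def by auto
      show "M = 1 \<or> M \<in> set (p @ [x])" using I unfolding prefix_state_def by auto
      show "\<forall>y. inversion_bottom p y \<or> y = x \<and> (\<exists>z\<in>set p. x < z) \<longrightarrow> y \<le> x"
        using I bx unfolding prefix_state_def by force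
      show "x = 1 \<or> inversion_bottom p x \<or> x = x \<and> (\<exists>z\<in>set p. x < z)" using e by simp
    qed
    with True show ?thesis by simp
  next
    case False
    with xM have e: "\<not> (\<exists>z\<in>set p. z > x)" by blast
    have "prefix_state (p @ [x]) b x"
      unfolding prefix_state_def inversion_bottom_snoc
    proof (intro conjI)
      show "1 \<le> b" using I unfolding prefix_state_def by simp
      show "\<forall>y\<in>set (p @ [x]). y \<le> x" using I False unfolding prefix_state_def by auto
      show "x = 1 \<or> x \<in> set (p @ [x])" by simp
      show "\<forall>y. inversion_bottom p y \<or> y = x \<and> (\<exists>z\<in>set p. x < z) \<longrightarrow> y \<le> b"
        using I e unfolding prefix_state_def by auto
      show "b = 1 \<or> inversion_bottom p b \<or> b = x \<and> (\<exists>z\<in>set p. x < z)"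
        using I unfolding prefix_state_def by blast
    qed
    with False show ?thesis by (simp add: max_def)
  qed
qed

(* The state (b, M) is the one described by prefix_state; a letter below b would complete
   a 321 pattern. *)
fun accepts :: "nat \<Rightarrow> nat \<Rightarrow> nat \<Rightarrow> nat list \<Rightarrow> bool" where
  "accepts k b M [] = True"
| "accepts k b M (x # u) \<longleftrightarrow> b \<le> x \<and> x \<le> k \<and> accepts k (if x < M then x else b) (max M x) u"

lemma accepts_iff_avoids321:
  assumes "prefix_state p b M" "avoids321 p"
  shows "accepts k b M u \<longleftrightarrow> set u \<subseteq> {1..k} \<and> avoids321 (p @ u)"
  using assms
proof (induction u arbitrary: p b M)
  case Nil
  then show ?case by simp
next
  case (Cons x u)
  have "1 \<le> b" using Cons.prems(1) unfolding prefix_state_def by simp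
  show ?case
  proof (cases "b \<le> x \<and> x \<le> k")
    case True
    with \<open>1 \<le> b\<close> have "1 \<le> x" by simp
    then have "avoids321 (p @ [x])"
      using avoids321_snoc_iff_state[OF Cons.prems] True by simp
    with Cons.IH[OF prefix_state_snoc[OF Cons.prems(1)]] True \<open>1 \<le> x\<close> show ?thesis
      by simp
  next
    case False
    have "\<not> avoids321 (p @ [x] @ u)" if "1 \<le> x" "x \<le> k"
    proof -
      have "\<not> avoids321 (p @ [x])"
        using avoids321_snoc_iff_state[OF Cons.prems that(1)] False that(2) by simp
      then show ?thesis using avoids321_appendD[of "p @ [x]" u] by auto
    qed
    with False show ?thesis by auto
  qed
qed

definition accepted_count :: "nat \<Rightarrow> nat \<Rightarrow> nat \<Rightarrow> nat \<Rightarrow> nat" where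
  "accepted_count k n b M = card {u. length u = n \<and> accepts k b M u}"

lemma w321_eq_accepted_count: "w321 n k = accepted_count k n 1 1"
proof -
  have "avoids321 []" unfolding avoids321_def by simp
  then show ?thesis
    using accepts_iff_avoids321[OF prefix_state_Nil, of k]
    unfolding w321_def accepted_count_def by simp
qed

lemma accepts_subset: "accepts k b M u \<Longrightarrow> set u \<subseteq> {..k}"
  by (induction u arbitrary: b M) auto

lemma finite_accepted: "finite {u. length u = n \<and> accepts k b M u}"
  by (rule finite_subset[OF _ finite_lists_length_eq[of "{..k}" n]]) (auto dest: accepts_subset)

lemma accepted_count_0: "accepted_count k 0 b M = 1"
proof -
  have "{u. length u = 0 \<and> accepts k b M u} = {[]}" by auto
  then show ?thesis unfolding accepted_count_def by simp
qed

lemma accepted_count_Suc: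
  "accepted_count k (Suc n) b M =
    (\<Sum>x\<in>{b..k}. accepted_count k n (if x < M then x else b) (max M x))"
proof -
  have "{u. length u = Suc n \<and> accepts k b M u} =
     (\<Union>x\<in>{b..k}. (#) x ` {u. length u = n \<and> accepts k (if x < M then x else b) (max M x) u})"
    by (auto simp: length_Suc_conv)
  then have "accepted_count k (Suc n) b M = (\<Sum>x\<in>{b..k}.
      card ((#) x ` {u. length u = n \<and> accepts k (if x < M then x else b) (max M x) u}))"
    unfolding accepted_count_def by (simp only:) (rule card_UN_disjoint, auto simp: finite_accepted)
  then show ?thesis
    unfolding accepted_count_def by (simp add: card_image)
qed

lemma accepted_count_Suc_split:
  assumes "b \<le> M" "M \<le> k"
  shows "accepted_count k (Suc n) b M = (\<Sum>x\<in>{b..<M}. accepted_count k n x M)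
    + accepted_count k n b M + (\<Sum>x\<in>{M<..k}. accepted_count k n b x)"
proof -
  define f where "f x = accepted_count k n (if x < M then x else b) (max M x)" for x
  have "{b..k} = {b..<M} \<union> insert M {M<..k}" using assms by auto
  then have "sum f {b..k} = sum f {b..<M} + sum f (insert M {M<..k})"
    by (simp only:) (rule sum.union_disjoint, auto)
  also have "sum f (insert M {M<..k}) = f M + sum f {M<..k}" by simp
  also have "sum f {b..<M} = (\<Sum>x\<in>{b..<M}. accepted_count k n x M)"
    by (rule sum.cong) (auto simp: f_def max_def)
  also have "sum f {M<..k} = (\<Sum>x\<in>{M<..k}. accepted_count k n b x)"
    by (rule sum.cong) (auto simp: f_def max_def)
  finally show ?thesis by (simp add: accepted_count_Suc f_def)
qed

section \<open>A determinant formula for the number of accepted words\<close>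

definition multichoose :: "int \<Rightarrow> nat \<Rightarrow> int" where
  "multichoose m v = (if m < 0 then 0 else int ((v + nat m - 1) choose nat m))"

lemma multichoose_neg: "m < 0 \<Longrightarrow> multichoose m v = 0"
  by (simp add: multichoose_def)

lemma multichoose_0 [simp]: "multichoose 0 v = 1"
  by (simp add: multichoose_def)

lemma multichoose_pos_0: "m > 0 \<Longrightarrow> multichoose m 0 = 0"
  by (simp add: multichoose_def)

lemma multichoose_Suc: "multichoose m (Suc v) = multichoose m v + multichoose (m - 1) (Suc v)"
proof (cases "m \<le> 0")
  case True
  then show ?thesis by (cases "m = 0") (simp_all add: multichoose_def)
next
  case False
  then have "nat m > 0" by simp
  then obtain j where "nat m = Suc j"
    using gr0_implies_Suc by blast
  with False have "nat (m - 1) = j" "\<not> m < 0" "\<not> m - 1 < 0" by auto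
  with \<open>nat m = Suc j\<close> show ?thesis by (simp add: multichoose_def)
qed

lemma sum_multichoose:
  assumes "\<beta> \<le> \<alpha>"
  shows "(\<Sum>v\<in>{Suc \<beta>..\<alpha>}. multichoose m v) = multichoose (m + 1) \<alpha> - multichoose (m + 1) \<beta>"
  using assms
proof (induction \<alpha> rule: dec_induct)
  case base
  then show ?case by simp
next
  case (step a)
  then have "{Suc \<beta>..Suc a} = insert (Suc a) {Suc \<beta>..a}" by auto
  with step show ?case using multichoose_Suc[of "m + 1" a] by simp
qed

lemma sum_multichoose_below:
  assumes "1 \<le> \<beta>" "0 \<le> m"
  shows "(\<Sum>v\<in>{1..\<beta> - 1}. multichoose m v) = multichoose (m + 1) \<beta> - multichoose m \<beta>"
proof -
  have "(\<Sum>v\<in>{Suc 0..\<beta> - 1}. multichoose m v) = multichoose (m + 1) (\<beta> - 1) - multichoose (m + 1) 0"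
    by (rule sum_multichoose) simp
  also have "multichoose (m + 1) 0 = 0" using assms by (simp add: multichoose_pos_0)
  also have "multichoose (m + 1) (\<beta> - 1) = multichoose (m + 1) \<beta> - multichoose m \<beta>"
    using multichoose_Suc[of "m + 1" "\<beta> - 1"] assms by simp
  finally show ?thesis by simp
qed

definition two_row_det :: "nat \<Rightarrow> nat \<Rightarrow> nat \<Rightarrow> nat \<Rightarrow> int" where
  "two_row_det n \<alpha> \<beta> a = multichoose (int a) \<alpha> * multichoose (int n - int a) \<beta>
     - multichoose (int a - 1) \<alpha> * multichoose (int n - int a + 1) \<beta>"

definition det_sum :: "nat \<Rightarrow> nat \<Rightarrow> nat \<Rightarrow> int" where
  "det_sum n \<alpha> \<beta> = (\<Sum>a\<le>n. int (n choose a) * two_row_det n \<alpha> \<beta> a)"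

lemma sum_two_row_det_first_row:
  assumes "\<beta> \<le> \<alpha>"
  shows "(\<Sum>\<alpha>'\<in>{Suc \<beta>..\<alpha>}. two_row_det n \<alpha>' \<beta> a) =
    (multichoose (int a + 1) \<alpha> - multichoose (int a + 1) \<beta>) * multichoose (int n - int a) \<beta>
    - (multichoose (int a) \<alpha> - multichoose (int a) \<beta>) * multichoose (int n - int a + 1) \<beta>"
  unfolding two_row_det_def sum_subtractf sum_distrib_right[symmetric]
  using sum_multichoose[OF assms, of "int a"] sum_multichoose[OF assms, of "int a - 1"] by simp

lemma sum_two_row_det_second_row:
  assumes "1 \<le> \<beta>" "a \<le> n"
  shows "(\<Sum>\<beta>'\<in>{1..\<beta> - 1}. two_row_det n \<alpha> \<beta>' a) =
    multichoose (int a) \<alpha> * (multichoose (int n - int a + 1) \<beta> - multichoose (int n - int a) \<beta>)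
    - multichoose (int a - 1) \<alpha> *
      (multichoose (int n - int a + 2) \<beta> - multichoose (int n - int a + 1) \<beta>)"
  unfolding two_row_det_def sum_subtractf sum_distrib_left[symmetric]
  using sum_multichoose_below[OF assms(1), of "int n - int a"]
    sum_multichoose_below[OF assms(1), of "int n - int a + 1"] assms(2)
  by (simp add: add.assoc)

lemma sum_binomial_Suc:
  fixes f :: "nat \<Rightarrow> 'a::comm_semiring_1"
  shows "(\<Sum>a\<le>Suc n. of_nat (Suc n choose a) * f a) =
    (\<Sum>a\<le>n. of_nat (n choose a) * (f a + f (Suc a)))"
proof -
  have "(\<Sum>a\<le>Suc n. of_nat (Suc n choose a) * f a)
      = f 0 + (\<Sum>a\<le>n. of_nat (Suc n choose Suc a) * f (Suc a))"
    by (subst sum.atMost_Suc_shift) simp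
  also have "\<dots> = (f 0 + (\<Sum>a\<le>n. of_nat (n choose Suc a) * f (Suc a)))
      + (\<Sum>a\<le>n. of_nat (n choose a) * f (Suc a))"
    by (simp add: sum.distrib algebra_simps)
  also have "(\<Sum>a\<le>n. of_nat (n choose Suc a) * f (Suc a)) =
      (\<Sum>a<n. of_nat (n choose Suc a) * f (Suc a))"
    by (simp add: binomial_eq_0 lessThan_Suc_atMost[symmetric])
  also have "f 0 + (\<Sum>a<n. of_nat (n choose Suc a) * f (Suc a)) = (\<Sum>a\<le>n. of_nat (n choose a) * f a)"
    by (subst sum.atMost_shift) simp
  finally show ?thesis by (simp add: distrib_left sum.distrib)
qed

lemma sum_binomial_multichoose_reflect:
  "(\<Sum>a\<le>n. int (n choose a) * (multichoose (int a) \<beta> * multichoose (int n - int a + 1) \<beta>))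
   = (\<Sum>a\<le>n. int (n choose a) * (multichoose (int a + 1) \<beta> * multichoose (int n - int a) \<beta>))"
proof -
  have "(\<Sum>a\<in>{0..n}. int (n choose a) * (multichoose (int a + 1) \<beta> * multichoose (int n - int a) \<beta>))
      = (\<Sum>a\<in>{0..n}. int (n choose (n + 0 - a)) *
          (multichoose (int (n + 0 - a) + 1) \<beta> * multichoose (int n - int (n + 0 - a)) \<beta>))"
    by (rule sum.atLeastAtMost_rev)
  also have "\<dots> = (\<Sum>a\<in>{0..n}.
      int (n choose a) * (multichoose (int a) \<beta> * multichoose (int n - int a + 1) \<beta>))"
    by (rule sum.cong) (auto simp: binomial_symmetric[symmetric] algebra_simps)
  finally show ?thesis by (simp add: atLeast0AtMost)
qed

(* Summing over the next letter is a hockey-stick sum in the first or in the second row of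
   each determinant; what is left over cancels under the reflection a <-> n - a. *)
lemma det_sum_Suc:
  assumes "1 \<le> \<beta>" "\<beta> \<le> \<alpha>"
  shows "det_sum (Suc n) \<alpha> \<beta> =
    det_sum n \<alpha> \<beta> + (\<Sum>\<alpha>'\<in>{Suc \<beta>..\<alpha>}. det_sum n \<alpha>' \<beta>) + (\<Sum>\<beta>'\<in>{1..\<beta> - 1}. det_sum n \<alpha> \<beta>')"
proof -
  define C where "C a = int (n choose a)" for a
  define X1 where "X1 a = (\<Sum>\<alpha>'\<in>{Suc \<beta>..\<alpha>}. two_row_det n \<alpha>' \<beta> a)" for a
  define X2 where "X2 a = (\<Sum>\<beta>'\<in>{1..\<beta> - 1}. two_row_det n \<alpha> \<beta>' a)" for a
  define Y where "Y a = multichoose (int a) \<beta> * multichoose (int n - int a + 1) \<beta>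
      - multichoose (int a + 1) \<beta> * multichoose (int n - int a) \<beta>" for a
  have split: "two_row_det n \<alpha> \<beta> a + X1 a + X2 a
      = two_row_det (Suc n) \<alpha> \<beta> a + two_row_det (Suc n) \<alpha> \<beta> (Suc a) + Y a" if "a \<le> n" for a
    unfolding X1_def X2_def Y_def
      sum_two_row_det_first_row[OF assms(2)] sum_two_row_det_second_row[OF assms(1) that]
    unfolding two_row_det_def by (simp add: algebra_simps)
  have upper: "(\<Sum>\<alpha>'\<in>{Suc \<beta>..\<alpha>}. det_sum n \<alpha>' \<beta>) = (\<Sum>a\<le>n. C a * X1 a)"
    unfolding det_sum_def X1_def C_def sum_distrib_left by (rule sum.swap)
  have lower: "(\<Sum>\<beta>'\<in>{1..\<beta> - 1}. det_sum n \<alpha> \<beta>') = (\<Sum>a\<le>n. C a * X2 a)"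
    unfolding det_sum_def X2_def C_def sum_distrib_left by (rule sum.swap)
  have symmetric: "(\<Sum>a\<le>n. C a * Y a) = 0"
    using sum_binomial_multichoose_reflect[of n \<beta>]
    unfolding C_def Y_def by (simp add: right_diff_distrib sum_subtractf)
  have "det_sum n \<alpha> \<beta> + (\<Sum>\<alpha>'\<in>{Suc \<beta>..\<alpha>}. det_sum n \<alpha>' \<beta>) + (\<Sum>\<beta>'\<in>{1..\<beta> - 1}. det_sum n \<alpha> \<beta>')
      = (\<Sum>a\<le>n. C a * (two_row_det n \<alpha> \<beta> a + X1 a + X2 a))"
    by (simp only: upper lower) (simp only: det_sum_def C_def distrib_left sum.distrib)
  also have "\<dots> = (\<Sum>a\<le>n. C a * (two_row_det (Suc n) \<alpha> \<beta> a + two_row_det (Suc n) \<alpha> \<beta> (Suc a) + Y a))"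
    by (rule sum.cong) (simp_all add: split)
  also have "\<dots> = (\<Sum>a\<le>n. C a * (two_row_det (Suc n) \<alpha> \<beta> a + two_row_det (Suc n) \<alpha> \<beta> (Suc a)))"
    using symmetric by (simp add: distrib_left sum.distrib)
  also have "\<dots> = det_sum (Suc n) \<alpha> \<beta>"
    unfolding det_sum_def C_def by (rule sum_binomial_Suc[symmetric])
  finally show ?thesis ..
qed

lemma accepted_count_eq_det_sum:
  assumes "1 \<le> b" "b \<le> M" "M \<le> k"
  shows "int (accepted_count k n b M) = det_sum n (k + 1 - b) (k + 1 - M)"
  using assms
proof (induction n arbitrary: b M)
  case 0
  then show ?case by (simp add: accepted_count_0 det_sum_def two_row_det_def multichoose_neg)
next
  case (Suc n)
  define \<alpha> where "\<alpha> = k + 1 - b"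
  define \<beta> where "\<beta> = k + 1 - M"
  have "(\<Sum>x\<in>{b..<M}. int (accepted_count k n x M)) = (\<Sum>x\<in>{b..<M}. det_sum n (k + 1 - x) \<beta>)"
    by (rule sum.cong) (use Suc in \<open>auto simp: \<beta>_def\<close>)
  also have "\<dots> = (\<Sum>\<alpha>'\<in>{Suc \<beta>..\<alpha>}. det_sum n \<alpha>' \<beta>)"
    by (rule sum.reindex_bij_witness[where i="\<lambda>x. k + 1 - x" and j="\<lambda>x. k + 1 - x"])
       (use Suc.prems in \<open>auto simp: \<alpha>_def \<beta>_def\<close>)
  finally have upper:
    "(\<Sum>x\<in>{b..<M}. int (accepted_count k n x M)) = (\<Sum>\<alpha>'\<in>{Suc \<beta>..\<alpha>}. det_sum n \<alpha>' \<beta>)" .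
  have "(\<Sum>x\<in>{M<..k}. int (accepted_count k n b x)) = (\<Sum>x\<in>{M<..k}. det_sum n \<alpha> (k + 1 - x))"
    by (rule sum.cong) (use Suc in \<open>auto simp: \<alpha>_def\<close>)
  also have "\<dots> = (\<Sum>\<beta>'\<in>{1..\<beta> - 1}. det_sum n \<alpha> \<beta>')"
    by (rule sum.reindex_bij_witness[where i="\<lambda>x. k + 1 - x" and j="\<lambda>x. k + 1 - x"])
       (use Suc.prems in \<open>auto simp: \<alpha>_def \<beta>_def\<close>)
  finally have lower:
    "(\<Sum>x\<in>{M<..k}. int (accepted_count k n b x)) = (\<Sum>\<beta>'\<in>{1..\<beta> - 1}. det_sum n \<alpha> \<beta>')" .
  have "int (accepted_count k n b M) = det_sum n \<alpha> \<beta>"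
    using Suc unfolding \<alpha>_def \<beta>_def by simp
  with upper lower have "int (accepted_count k (Suc n) b M) = det_sum n \<alpha> \<beta>
      + (\<Sum>\<alpha>'\<in>{Suc \<beta>..\<alpha>}. det_sum n \<alpha>' \<beta>) + (\<Sum>\<beta>'\<in>{1..\<beta> - 1}. det_sum n \<alpha> \<beta>')"
    unfolding accepted_count_Suc_split[OF Suc.prems(2,3)] by simp
  also have "\<dots> = det_sum (Suc n) \<alpha> \<beta>"
    by (rule det_sum_Suc[symmetric]) (use Suc.prems in \<open>auto simp: \<alpha>_def \<beta>_def\<close>)
  finally show ?case unfolding \<alpha>_def \<beta>_def .
qed

section \<open>The diagonal case and the closed form of its terms\<close>

definition ballot :: "nat \<Rightarrow> nat \<Rightarrow> int" where
  "ballot n j = int (n choose j) - (if j = 0 then 0 else int (n choose (j - 1)))"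

lemma sum_ballot: "(\<Sum>j\<le>m. ballot n j) = int (n choose m)"
  by (induction m) (auto simp: ballot_def)

lemma choose_eq_sum_ballot:
  assumes "a \<le> n"
  shows "int (n choose a) = (\<Sum>j\<in>{j\<in>{..n div 2}. j \<le> a \<and> a \<le> n - j}. ballot n j)"
proof -
  have "int (n choose a) = int (n choose (min a (n - a)))"
    using binomial_symmetric[OF assms] by (simp add: min_def)
  also have "\<dots> = (\<Sum>j\<le>min a (n - a). ballot n j)" by (rule sum_ballot[symmetric])
  also have "{..min a (n - a)} = {j\<in>{..n div 2}. j \<le> a \<and> a \<le> n - j}" using assms by auto
  finally show ?thesis .
qed

lemma sum_two_row_det_diag:
  assumes "2 * j \<le> n"
  shows "(\<Sum>a\<in>{j..n - j}. two_row_det n v v a) = two_row_det n v v j"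
proof -
  define G where "G i = multichoose (int i - 1) v * multichoose (int n - int i + 1) v" for i :: nat
  have "two_row_det n v v a = G (Suc a) - G a" for a
    unfolding two_row_det_def G_def by (simp add: algebra_simps)
  then have "(\<Sum>a\<in>{j..n - j}. two_row_det n v v a) = G (Suc (n - j)) - G j"
    using assms by (simp add: sum_Suc_diff)
  also have "\<dots> = two_row_det n v v j"
    unfolding G_def two_row_det_def using assms by (simp add: algebra_simps)
  finally show ?thesis .
qed

lemma det_sum_diag: "det_sum n v v = (\<Sum>j\<le>n div 2. ballot n j * two_row_det n v v j)"
proof -
  have "det_sum n v v =
      (\<Sum>a\<le>n. \<Sum>j\<in>{j\<in>{..n div 2}. j \<le> a \<and> a \<le> n - j}. ballot n j * two_row_det n v v a)"
    unfolding det_sum_def by (rule sum.cong) (simp_all add: choose_eq_sum_ballot sum_distrib_right)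
  also have "\<dots> = (\<Sum>j\<le>n div 2. \<Sum>a\<in>{a\<in>{..n}. j \<le> a \<and> a \<le> n - j}. ballot n j * two_row_det n v v a)"
    by (rule sum.swap_restrict) simp_all
  also have "\<dots> = (\<Sum>j\<le>n div 2. ballot n j * two_row_det n v v j)"
  proof (rule sum.cong)
    fix j assume "j \<in> {..n div 2}"
    then have "{a\<in>{..n}. j \<le> a \<and> a \<le> n - j} = {j..n - j}" "2 * j \<le> n" by auto
    then show "(\<Sum>a\<in>{a\<in>{..n}. j \<le> a \<and> a \<le> n - j}. ballot n j * two_row_det n v v a)
        = ballot n j * two_row_det n v v j"
      by (simp add: sum_distrib_left[symmetric] sum_two_row_det_diag)
  qed simp
  finally show ?thesis .
qed

lemma falling_fact_eq_pochhammer: "falling_fact x m = pochhammer (x - real m + 1) m"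
proof (induction m)
  case 0
  then show ?case by (simp add: falling_fact_def)
next
  case (Suc m)
  have "falling_fact x (Suc m) = (x - real m) * falling_fact x m"
    by (simp add: falling_fact_def)
  also have "\<dots> = pochhammer (x - real (Suc m) + 1) (Suc m)"
    using Suc by (simp add: pochhammer_rec)
  finally show ?case .
qed

lemma multichoose_eq_pochhammer:
  "real_of_int (multichoose (int m) v) = pochhammer (real v) m / fact m"
proof (cases "v = 0")
  case True
  then show ?thesis by (cases m) (simp_all add: multichoose_def pochhammer_0_left)
next
  case False
  have "real_of_int (multichoose (int m) v) = real (v + m - 1) gchoose m"
    by (simp add: multichoose_def binomial_gbinomial)
  also have "\<dots> = pochhammer (real v) m / fact m"
    using False by (simp add: gbinomial_pochhammer')
  finally show ?thesis .
qed

lemma fact_mult_pochhammer: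
  "fact r * pochhammer (of_nat r + 1) j = (fact (r + j) :: 'a::{semiring_char_0,comm_semiring_1})"
proof -
  have "fact (r + j) = (pochhammer 1 (r + j) :: 'a)" by (rule pochhammer_fact)
  also have "\<dots> = pochhammer 1 r * pochhammer (1 + of_nat r) j" by (rule pochhammer_product')
  finally show ?thesis by (simp add: pochhammer_fact add.commute)
qed

lemma ballot_eq:
  assumes "j \<le> n"
  shows "real_of_int (ballot n j) =
    fact n * (real n - 2 * real j + 1) / (fact j * fact (n + 1 - j))"
proof -
  have "real_of_int (ballot n j) * (fact j * fact (n + 1 - j)) = fact n * (real n - 2 * real j + 1)"
  proof (cases j)
    case 0
    then show ?thesis by (simp add: ballot_def algebra_simps)
  next
    case (Suc i)
    define m where "m = n - j"
    have n: "n + 1 - j = Suc m" "n - i = Suc m" "real n - 2 * real j + 1 = real m - real i"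
      using assms Suc by (auto simp: m_def)
    have choose_j: "real (n choose j) * fact j * fact m = fact n"
      using arg_cong[OF binomial_fact_lemma[OF assms], of real] unfolding m_def
      by (simp add: ac_simps)
    have "i \<le> n" using assms Suc by simp
    from arg_cong[OF binomial_fact_lemma[OF this], of real]
    have choose_i: "real (n choose i) * fact i * fact (Suc m) = fact n"
      unfolding n(2) by (simp add: algebra_simps)
    have "real_of_int (ballot n j) * (fact j * fact (n + 1 - j))
        = (real m + 1) * (real (n choose j) * fact j * fact m)
          - (real i + 1) * (real (n choose i) * fact i * fact (Suc m))"
      unfolding n(1) using Suc by (simp add: ballot_def algebra_simps)
    then show ?thesis unfolding choose_j choose_i n(3) by (simp add: algebra_simps)
  qed
  then show ?thesis by (simp add: eq_divide_eq)
qed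

lemma two_row_det_diag_eq:
  assumes "j \<le> n"
  shows "real_of_int (two_row_det n v v j) = pochhammer (real v - 1) j * pochhammer (real v) (n - j)
    * (real n - 2 * real j + 1) / (fact j * fact (n + 1 - j))"
proof -
  have "real_of_int (two_row_det n v v j) * (fact j * fact (n + 1 - j))
      = pochhammer (real v - 1) j * pochhammer (real v) (n - j) * (real n - 2 * real j + 1)"
  proof (cases j)
    case 0
    then show ?thesis
      by (simp add: two_row_det_def multichoose_neg multichoose_eq_pochhammer algebra_simps)
  next
    case (Suc i)
    define m where "m = n - j"
    have n: "n + 1 - j = Suc m" "n - j = m" "real n - 2 * real j + 1 = real m - real i"
      using assms Suc by (auto simp: m_def)
    have args: "int n - int j = int m" "int j - 1 = int i" "int m + 1 = int (Suc m)"
      using assms Suc by (auto simp: m_def)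
    have det: "real_of_int (two_row_det n v v j) =
        pochhammer (real v) (Suc i) / fact (Suc i) * (pochhammer (real v) m / fact m)
        - pochhammer (real v) i / fact i * (pochhammer (real v) (Suc m) / fact (Suc m))"
      unfolding two_row_det_def args
      unfolding of_int_diff of_int_mult multichoose_eq_pochhammer Suc ..
    have frac: "(A / (a * f) * (B / g) - C / f * (D / (c * g))) * (a * f * (c * g))
        = A * B * c - C * D * a"
      if "a \<noteq> 0" "c \<noteq> 0" "f \<noteq> 0" "g \<noteq> 0" for A B C D a c f g :: real
      using that by (simp add: field_simps)
    have "real_of_int (two_row_det n v v j) * (fact j * fact (n + 1 - j))
        = pochhammer (real v) (Suc i) * pochhammer (real v) m * real (Suc m)
          - pochhammer (real v) i * pochhammer (real v) (Suc m) * real (Suc i)"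
      unfolding det n(1) unfolding Suc fact_Suc by (rule frac) simp_all
    also have "\<dots> = pochhammer (real v - 1) j * pochhammer (real v) m * (real m - real i)"
    proof -
      have shift: "pochhammer (real v - 1) (Suc i) = (real v - 1) * pochhammer (real v) i"
        by (simp add: pochhammer_rec)
      show ?thesis
        unfolding Suc unfolding shift unfolding pochhammer_Suc by (simp add: algebra_simps)
    qed
    finally show ?thesis unfolding n(2,3) .
  qed
  then show ?thesis by (simp add: eq_divide_eq)
qed

lemma ballot_mult_two_row_det_eq:
  assumes "2 * j \<le> n"
  shows "real_of_int (ballot n j * two_row_det n k k j) =
    fact n * falling_fact (real k + real n - real j - 1) (n - j)
      * falling_fact (real k + real j - 2) j
    / (fact j * fact (n - 2 * j) * falling_fact (real n - real j + 1) j) ^ 2"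
proof -
  define r where "r = n - 2 * j"
  define c where "c = real n - 2 * real j + 1"
  have r: "Suc r + j = n + 1 - j" "real (Suc r) = c" using assms by (auto simp: r_def c_def)
  have "c \<noteq> 0" "j \<le> n" using assms by (simp_all add: c_def)
  have ff: "falling_fact (real k + real n - real j - 1) (n - j) = pochhammer (real k) (n - j)"
    "falling_fact (real k + real j - 2) j = pochhammer (real k - 1) j"
    "falling_fact (real n - real j + 1) j = pochhammer (real (Suc r) + 1) j"
    using assms by (simp_all add: falling_fact_eq_pochhammer r_def algebra_simps)
  have "fact (Suc r) * pochhammer (real (Suc r) + 1) j = (fact (n + 1 - j) :: real)"
    using fact_mult_pochhammer[of "Suc r" j, where 'a=real] unfolding r(1) .
  moreover have "fact (Suc r) = c * (fact r :: real)"
    unfolding r(2)[symmetric] by simp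
  ultimately have "fact r * pochhammer (real (Suc r) + 1) j * c = fact (n + 1 - j)"
    by (metis mult.assoc mult.commute)
  then have den: "fact r * pochhammer (real (Suc r) + 1) j = fact (n + 1 - j) / c"
    using \<open>c \<noteq> 0\<close> by (simp add: nonzero_eq_divide_eq)
  show ?thesis
    unfolding ff mult.assoc[of "fact j"] r_def[symmetric] den of_int_mult
      ballot_eq[OF \<open>j \<le> n\<close>] two_row_det_diag_eq[OF \<open>j \<le> n\<close>]
      c_def[symmetric]
    using \<open>c \<noteq> 0\<close> by (simp add: field_simps power2_eq_square)
qed

theorem corollary3p2:
  fixes n k :: nat
  assumes "n \<ge> 1" and "k \<ge> 1"
  shows "real (w321 n k) =
    (\<Sum>a = 0..n div 2.
       fact n * falling_fact (real k + real n - real a - 1) (n - a)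
              * falling_fact (real k + real a - 2) a
       / (fact a * fact (n - 2 * a) * falling_fact (real n - real a + 1) a) ^ 2)"
proof -
  have "real (w321 n k) = real_of_int (det_sum n k k)"
    using accepted_count_eq_det_sum[of 1 1 k n] assms(2) by (simp add: w321_eq_accepted_count)
  also have "\<dots> = (\<Sum>a\<le>n div 2. real_of_int (ballot n a * two_row_det n k k a))"
    by (simp add: det_sum_diag)
  also have "\<dots> = (\<Sum>a = 0..n div 2.
       fact n * falling_fact (real k + real n - real a - 1) (n - a)
              * falling_fact (real k + real a - 2) a
       / (fact a * fact (n - 2 * a) * falling_fact (real n - real a + 1) a) ^ 2)"
    unfolding atLeast0AtMost by (rule sum.cong[OF refl], rule ballot_mult_two_row_det_eq) auto
  finally show ?thesis .
qed

end
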